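(* Let $n\ge0$ be an integer and $S_n\in\mathbb R$, and define \[ M_n=\frac{1}{\sqrt{2\pi}}\int_{-\infty}^{\infty}\Big[\exp\Big(\eta S_n-\tfrac12\eta^2 n\Big)-1\Big]e^{-\eta^2/2}\,\frac{d\eta}{|\eta|}. \] Then \[ M_n=I\Big(\frac{S_n}{\sqrt{n+1}}\Big)-\frac{1}{\sqrt{2\pi}}\ln(1+n), \] where $I(x)=\int_0^x e^{u^2/2}\operatorname{erf}(u/\sqrt2)\,du$. Moreover $I$ is nonnegative, and consequently $M_n\ge-\frac{1}{\sqrt{2\pi}}\ln(1+n)$.
   Context: $\operatorname{erf}(z)=\frac{2}{\sqrt\pi}\int_0^z e^{-t^2}dt$. In the paper $S_n=\sum_{i\le n}(X_i-\mu)$ is the centered partial sum of a sequence of sub-Gaussian random variables; the identity holds pointwise for each value of $S_n$. *)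

theory Defs
  imports "HOL-Analysis.Analysis"
begin

text \<open>Error function; signed interval integral, so erf is odd.\<close>
definition erf :: "real \<Rightarrow> real" where
  "erf z = 2 / sqrt pi * (LBINT t=0..z. exp (- (t^2)))"

definition I_fun :: "real \<Rightarrow> real" where
  "I_fun x = (LBINT u=0..x. exp (u^2 / 2) * erf (u / sqrt 2))"

text \<open>The integrand defining M_n (value at eta = 0 is irrelevant: null set).\<close>
definition M_integrand :: "nat \<Rightarrow> real \<Rightarrow> real \<Rightarrow> real" where
  "M_integrand n S \<eta> = (exp (\<eta> * S - \<eta>^2 * real n / 2) - 1) * exp (- (\<eta>^2) / 2) / \<bar>\<eta>\<bar>"

definition M_val :: "nat \<Rightarrow> real \<Rightarrow> real" where
  "M_val n S = 1 / sqrt (2 * pi) * (LBINT \<eta>. M_integrand n S \<eta>)"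

end

theory Submission
  imports Defs "HOL-Probability.Distributions"
begin

text \<open>With a = n + 1 the integrand splits into two parameter integrals,
  (exp (eta S - a eta^2/2) - exp (- a eta^2/2)) / |eta| = int_0^S sgn eta exp (eta s - a eta^2/2) ds and
  (exp (- a eta^2/2) - exp (- eta^2/2)) / |eta| = - int_1^a |eta|/2 exp (- b eta^2/2) db,
  both dominated by Gaussians, so Fubini's theorem applies to each. Completing the square gives
  int sgn eta exp (eta s - a eta^2/2) d eta = sqrt (2 pi / a) exp (s^2/(2a)) erf (s / sqrt (2a)),
  which is sqrt (2 pi) times the derivative of s |-> I (s / sqrt a); and
  int |eta| exp (- b eta^2/2) d eta = 2 / b integrates to ln a.
  Finally, I is nonnegative because its integrand has the sign of u.\<close>

lemma has_real_derivative_interval_integral: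
  fixes f :: "real \<Rightarrow> real" and c x :: real
  assumes "continuous_on UNIV f"
  shows "((\<lambda>u. LBINT y=c..u. f y) has_real_derivative f x) (at x)"
proof -
  have "((\<lambda>u. LBINT y=c..u. f y) has_vector_derivative f x) (at x within {min c x - 1..max c x + 1})"
    by (rule interval_integral_FTC2) (auto intro: continuous_on_subset[OF assms])
  moreover have "at x within {min c x - 1..max c x + 1} = at x"
    by (rule at_within_Icc_at) auto
  ultimately show ?thesis
    by (simp add: has_real_derivative_iff_has_vector_derivative)
qed

lemma interval_integral_FTC_real:
  fixes f F :: "real \<Rightarrow> real" and a b :: real
  assumes "continuous_on {min a b..max a b} f"
    and "\<And>x. min a b \<le> x \<Longrightarrow> x \<le> max a b \<Longrightarrow> (F has_real_derivative f x) (at x)"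
  shows "(LBINT x=a..b. f x) = F b - F a"
  using assms
  by (intro interval_integral_FTC_finite)
    (auto simp: has_real_derivative_iff_has_vector_derivative[symmetric] intro: has_field_derivative_at_within)

lemma erf_has_real_derivative: "(erf has_real_derivative 2 / sqrt pi * exp (- (x^2))) (at x)"
  unfolding erf_def[abs_def] zero_ereal_def
  by (intro DERIV_cmult has_real_derivative_interval_integral continuous_intros)

lemma continuous_on_erf: "continuous_on A erf"
  using erf_has_real_derivative by (meson DERIV_isCont continuous_at_imp_continuous_on)

lemma erf_0 [simp]: "erf 0 = 0"
  by (simp add: erf_def zero_ereal_def)

lemma erf_minus: "erf (- x) = - erf x"
proof -
  have "((\<lambda>x. erf (- x) + erf x) has_real_derivative
      2 / sqrt pi * exp (- ((- x)^2)) * (- 1) + 2 / sqrt pi * exp (- (x^2))) (at x)" for x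
    by (intro derivative_intros DERIV_chain2[OF erf_has_real_derivative] erf_has_real_derivative)
  then have "((\<lambda>x. erf (- x) + erf x) has_real_derivative 0) (at x)" for x
    by simp
  then show ?thesis
    using DERIV_isconst_all[of "\<lambda>x. erf (- x) + erf x" x 0] by simp
qed

lemma erf_nonneg: "0 \<le> x \<Longrightarrow> 0 \<le> erf x"
  using DERIV_nonneg_imp_nondecreasing[of 0 x erf] erf_has_real_derivative by fastforce

lemma erf_nonpos: "x \<le> 0 \<Longrightarrow> erf x \<le> 0"
  using erf_nonneg[of "- x"] by (simp add: erf_minus)

lemma I_fun_has_real_derivative:
  "(I_fun has_real_derivative exp (x^2 / 2) * erf (x / sqrt 2)) (at x)"
  unfolding I_fun_def[abs_def] zero_ereal_def
  by (intro has_real_derivative_interval_integral continuous_intros continuous_on_compose2[OF continuous_on_erf]) auto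

lemma I_fun_0 [simp]: "I_fun 0 = 0"
  by (simp add: I_fun_def zero_ereal_def)

lemma I_fun_nonneg: "0 \<le> I_fun x"
proof (cases "0 \<le> x")
  case True
  have "I_fun 0 \<le> I_fun x"
  proof (rule DERIV_nonneg_imp_nondecreasing[OF True])
    fix y :: real assume "0 \<le> y"
    then have "0 \<le> erf (y / sqrt 2)" by (simp add: erf_nonneg)
    then show "\<exists>D. DERIV I_fun y :> D \<and> 0 \<le> D"
      using I_fun_has_real_derivative[of y] by (meson exp_ge_zero mult_nonneg_nonneg)
  qed
  then show ?thesis by simp
next
  case False
  have "I_fun 0 \<le> I_fun x"
  proof (rule DERIV_nonpos_imp_nonincreasing[of x 0 I_fun])
    fix y :: real assume "x \<le> y" "y \<le> 0"
    then have "erf (y / sqrt 2) \<le> 0" by (simp add: erf_nonpos divide_nonpos_pos)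
    then show "\<exists>D. DERIV I_fun y :> D \<and> D \<le> 0"
      using I_fun_has_real_derivative[of y] by (meson exp_ge_zero mult_nonneg_nonpos)
  qed (use False in simp)
  then show ?thesis by simp
qed

lemma exp_minus_sq_eq_normal_density:
  fixes a x :: real
  assumes "0 < a"
  shows "exp (- (a * x^2) / 2) = sqrt (2 * pi / a) * normal_density 0 (1 / sqrt a) x"
  using assms by (simp add: normal_density_def power_divide real_sqrt_divide field_simps)

lemma integrable_exp_minus_sq:
  fixes a :: real
  assumes "0 < a"
  shows "integrable lborel (\<lambda>x. exp (- (a * x^2) / 2))"
  unfolding exp_minus_sq_eq_normal_density[OF assms] using assms by (auto intro: integrable_normal_density)

lemma has_bochner_integral_abs_mult_exp_minus_sq:
  fixes b :: real
  assumes "0 < b"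
  shows "has_bochner_integral lborel (\<lambda>x. \<bar>x\<bar> * exp (- (b * x^2) / 2)) (2 / b)"
proof -
  have "has_bochner_integral lborel (\<lambda>x. normal_density 0 (1 / sqrt b) x * \<bar>x\<bar>) (sqrt (2 / pi) / sqrt b)"
    using normal_moment_abs_odd[of "1 / sqrt b" 0 0] assms by simp
  then have "has_bochner_integral lborel (\<lambda>x. sqrt (2 * pi / b) * (normal_density 0 (1 / sqrt b) x * \<bar>x\<bar>))
      (sqrt (2 * pi / b) * (sqrt (2 / pi) / sqrt b))"
    by (rule has_bochner_integral_mult_right)
  moreover have "sqrt (2 * pi / b) * (sqrt (2 / pi) / sqrt b) = 2 / b"
    using assms by (simp add: real_sqrt_divide real_sqrt_mult field_simps)
  ultimately show ?thesis
    unfolding exp_minus_sq_eq_normal_density[OF assms] by (simp add: ac_simps)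
qed

lemma interval_integral_exp_minus_sq:
  fixes a c :: real
  assumes "0 < a"
  shows "(LBINT w=-c..c. exp (- (a * w^2) / 2)) = sqrt (2 * pi / a) * erf (c * sqrt (a / 2))"
proof -
  define F where "F w = sqrt (2 * pi / a) / 2 * erf (w * sqrt (a / 2))" for w
  have "(F has_real_derivative exp (- (a * w^2) / 2)) (at w)" for w
  proof -
    have "(F has_real_derivative sqrt (2 * pi / a) / 2 * (2 / sqrt pi * exp (- ((w * sqrt (a / 2))^2)) * (1 * sqrt (a / 2)))) (at w)"
      unfolding F_def[abs_def]
      by (intro DERIV_cmult DERIV_chain2[OF erf_has_real_derivative] DERIV_cmult_right DERIV_ident)
    moreover have "sqrt (2 * pi / a) / 2 * (2 / sqrt pi * exp (- ((w * sqrt (a / 2))^2)) * (1 * sqrt (a / 2)))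
        = exp (- (a * w^2) / 2)"
      using assms by (simp add: power_mult_distrib real_sqrt_divide real_sqrt_mult field_simps)
    ultimately show ?thesis by simp
  qed
  then have "(LBINT w=-c..c. exp (- (a * w^2) / 2)) = F c - F (- c)"
    by (intro interval_integral_FTC_real continuous_intros) auto
  then show ?thesis
    by (simp add: F_def erf_minus)
qed

text \<open>Reflecting x to -x turns sgn (c + x) into sgn (c - x), and the two signs add up to
  twice the (oriented) indicator of the interval between -c and c.\<close>
lemma lborel_integral_sgn_add_mult_even:
  fixes f :: "real \<Rightarrow> real" and c :: real
  assumes f: "integrable lborel f" and even: "\<And>x. f (- x) = f x"
  shows "(\<integral>x. sgn (c + x) * f x \<partial>lborel) = (LBINT x=-c..c. f x)"
proof -
  have [measurable]: "f \<in> borel_measurable borel"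
    using borel_measurable_integrable[OF f] by simp
  have sgn_int: "integrable lborel (\<lambda>x. sgn (c + x) * f x)" "integrable lborel (\<lambda>x. sgn (c - x) * f x)"
    by (rule Bochner_Integration.integrable_bound[OF f]; force simp: abs_mult sgn_if)+
  define D :: "real \<Rightarrow> real" where "D x = indicator {-c<..<c} x - indicator {c<..<-c} x" for x
  have [measurable]: "D \<in> borel_measurable borel"
    unfolding D_def by measurable
  have D_int: "integrable lborel (\<lambda>x. D x * f x)"
    by (rule Bochner_Integration.integrable_bound[OF f]) (auto simp: D_def indicator_def abs_mult)
  have "(\<integral>x. sgn (c + x) * f x \<partial>lborel) = (\<integral>x. sgn (c - x) * f x \<partial>lborel)"
    using lborel_integral_real_affine[of "- 1" "\<lambda>x. sgn (c + x) * f x" 0] by (simp add: even)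
  then have "2 * (\<integral>x. sgn (c + x) * f x \<partial>lborel) = (\<integral>x. (sgn (c + x) + sgn (c - x)) * f x \<partial>lborel)"
    using sgn_int by (simp add: distrib_right)
  also have "\<dots> = (\<integral>x. 2 * (D x * f x) \<partial>lborel)"
  proof (rule integral_cong_AE)
    show "AE x in lborel. (sgn (c + x) + sgn (c - x)) * f x = 2 * (D x * f x)"
      using AE_lborel_singleton[of c] AE_lborel_singleton[of "- c"]
      by eventually_elim (auto simp: D_def indicator_def sgn_if)
  qed measurable
  also have "\<dots> = 2 * (LBINT x=-c..c. f x)"
    using D_int by (cases "0 \<le> c") (simp_all add: interval_lebesgue_integral_def set_lebesgue_integral_def D_def)
  finally show ?thesis by simp
qed

lemma has_bochner_integral_interval_integral_Icc:
  fixes h :: "real \<Rightarrow> real \<Rightarrow> real" and g :: "real \<Rightarrow> real" and p q :: real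
  assumes "p \<le> q"
    and [measurable]: "case_prod h \<in> borel_measurable (lborel \<Otimes>\<^sub>M lborel)"
    and cont: "\<And>\<eta>. continuous_on {p..q} (h \<eta>)"
    and bound: "\<And>\<eta> s. s \<in> {p..q} \<Longrightarrow> \<bar>h \<eta> s\<bar> \<le> g \<eta>"
    and g: "integrable lborel g"
  shows "has_bochner_integral lborel (\<lambda>\<eta>. LBINT s=p..q. h \<eta> s) (LBINT s=p..q. \<integral>\<eta>. h \<eta> s \<partial>lborel)"
proof -
  define F where "F \<eta> s = indicator {p..q} s * h \<eta> s" for \<eta> s
  have [measurable]: "case_prod F \<in> borel_measurable (lborel \<Otimes>\<^sub>M lborel)"
    unfolding F_def by measurable
  have F_int: "integrable lborel (F \<eta>)" for \<eta>
    using borel_integrable_atLeastAtMost'[OF cont, of \<eta>]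
    by (simp add: F_def[abs_def] set_integrable_def)
  have "(\<integral>s. norm (F \<eta> s) \<partial>lborel) \<le> (q - p) * g \<eta>" for \<eta>
  proof -
    have "(\<integral>s. norm (F \<eta> s) \<partial>lborel) \<le> (\<integral>s. indicator {p..q} s * g \<eta> \<partial>lborel)"
    proof (rule integral_mono)
      show "integrable lborel (\<lambda>s. indicator {p..q} s * g \<eta>)"
        using assms(1) by (simp add: integrable_indicator_iff emeasure_lborel_Icc)
      show "norm (F \<eta> s) \<le> indicator {p..q} s * g \<eta>" for s
        using bound[of s \<eta>] by (auto simp: F_def indicator_def abs_mult)
    qed (simp add: F_int integrable_norm)
    then show ?thesis
      using assms(1) by (simp add: mult.commute)
  qed
  then have "integrable lborel (\<lambda>\<eta>. \<integral>s. norm (F \<eta> s) \<partial>lborel)"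
    by (intro Bochner_Integration.integrable_bound[OF integrable_mult_right[OF g, of "q - p"]])
      (auto intro!: AE_I2 order.trans[OF _ abs_ge_self])
  then have "integrable (lborel \<Otimes>\<^sub>M lborel) (case_prod F)"
    using F_int by (intro lborel_pair.Fubini_integrable) auto
  then have "has_bochner_integral lborel (\<lambda>\<eta>. \<integral>s. F \<eta> s \<partial>lborel) (\<integral>s. \<integral>\<eta>. F \<eta> s \<partial>lborel \<partial>lborel)"
    by (simp add: has_bochner_integral_iff lborel_pair.integrable_fst lborel_pair.Fubini_integral)
  moreover have "(LBINT s=p..q. f s) = (\<integral>s. indicator {p..q} s * f s \<partial>lborel)" for f :: "real \<Rightarrow> real"
    using assms(1) by (simp add: interval_integral_Icc set_lebesgue_integral_def)
  ultimately show ?thesis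
    by (simp add: F_def)
qed

lemma has_bochner_integral_interval_integral:
  fixes h :: "real \<Rightarrow> real \<Rightarrow> real" and g :: "real \<Rightarrow> real" and p q :: real
  assumes "case_prod h \<in> borel_measurable (lborel \<Otimes>\<^sub>M lborel)"
    and "\<And>\<eta>. continuous_on {min p q..max p q} (h \<eta>)"
    and "\<And>\<eta> s. s \<in> {min p q..max p q} \<Longrightarrow> \<bar>h \<eta> s\<bar> \<le> g \<eta>"
    and "integrable lborel g"
  shows "has_bochner_integral lborel (\<lambda>\<eta>. LBINT s=p..q. h \<eta> s) (LBINT s=p..q. \<integral>\<eta>. h \<eta> s \<partial>lborel)"
proof (cases "p \<le> q")
  case True
  then show ?thesis
    using assms by (intro has_bochner_integral_interval_integral_Icc) auto
next
  case False
  then have "has_bochner_integral lborel (\<lambda>\<eta>. LBINT s=q..p. h \<eta> s) (LBINT s=q..p. \<integral>\<eta>. h \<eta> s \<partial>lborel)"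
    using assms by (intro has_bochner_integral_interval_integral_Icc) auto
  then show ?thesis
    by (subst (1 2) interval_integral_endpoints_reverse) (rule has_bochner_integral_minus)
qed

lemma interval_integral_mult_exp_affine:
  fixes p q t c :: real
  shows "(LBINT x=p..q. t * exp (t * x + c)) = exp (t * q + c) - exp (t * p + c)"
  by (rule interval_integral_FTC_real) (auto intro!: continuous_intros derivative_eq_intros)

lemma lborel_integral_sgn_mult_exp:
  fixes a s :: real
  assumes a: "0 < a"
  shows "(\<integral>\<eta>. sgn \<eta> * exp (\<eta> * s - a * \<eta>^2 / 2) \<partial>lborel)
    = sqrt (2 * pi / a) * exp (s^2 / (2 * a)) * erf (s / sqrt (2 * a))"
proof -
  define e where "e w = exp (- (a * w^2) / 2)" for w
  have "\<eta> * s - a * \<eta>^2 / 2 = s^2 / (2 * a) + (- (a * (\<eta> - s / a)^2) / 2)" for \<eta>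
    using a by (simp add: field_simps power2_eq_square)
  then have square: "sgn \<eta> * exp (\<eta> * s - a * \<eta>^2 / 2) = exp (s^2 / (2 * a)) * (sgn \<eta> * e (\<eta> - s / a))" for \<eta>
    by (simp only: e_def exp_add mult.left_commute)
  have "(\<integral>\<eta>. sgn \<eta> * exp (\<eta> * s - a * \<eta>^2 / 2) \<partial>lborel)
      = exp (s^2 / (2 * a)) * (\<integral>\<eta>. sgn \<eta> * e (\<eta> - s / a) \<partial>lborel)"
    by (simp only: square integral_mult_right_zero)
  also have "(\<integral>\<eta>. sgn \<eta> * e (\<eta> - s / a) \<partial>lborel) = (\<integral>w. sgn (s / a + w) * e w \<partial>lborel)"
    using lborel_integral_real_affine[of 1 "\<lambda>\<eta>. sgn \<eta> * e (\<eta> - s / a)" "s / a"] by simp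
  also have "\<dots> = (LBINT w=-(s / a)..s / a. e w)"
    using integrable_exp_minus_sq[OF a] by (intro lborel_integral_sgn_add_mult_even) (simp_all add: e_def)
  also have "\<dots> = sqrt (2 * pi / a) * erf (s / a * sqrt (a / 2))"
    unfolding e_def by (rule interval_integral_exp_minus_sq[OF a])
  also have "s / a * sqrt (a / 2) = s / sqrt (2 * a)"
  proof -
    have "sqrt (a / 2) * sqrt (2 * a) = a"
      using a by (simp flip: real_sqrt_mult)
    then show ?thesis
      using a by (simp add: field_simps)
  qed
  finally show ?thesis
    by (simp only: mult_ac)
qed

lemma integrable_exp_abs_mult_minus_sq:
  fixes a c :: real
  assumes a: "0 < a"
  shows "integrable lborel (\<lambda>x. exp (c * \<bar>x\<bar> - a * x^2 / 2))"
proof (rule Bochner_Integration.integrable_bound)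
  show "integrable lborel (\<lambda>x. exp (c^2 / a) * exp (- (a / 2 * x^2) / 2))"
    using integrable_exp_minus_sq[of "a / 2"] a by simp
  have "c * \<bar>x\<bar> - a * x^2 / 2 \<le> c^2 / a + - (a / 2 * x^2) / 2" for x
  proof -
    have "0 \<le> (c - a * \<bar>x\<bar> / 2)^2 / a"
      using a by simp
    also have "\<dots> = c^2 / a + - (a / 2 * x^2) / 2 - (c * \<bar>x\<bar> - a * x^2 / 2)"
      using a by (simp add: field_simps power2_eq_square)
    finally show ?thesis by simp
  qed
  then show "AE x in lborel. norm (exp (c * \<bar>x\<bar> - a * x^2 / 2)) \<le> norm (exp (c^2 / a) * exp (- (a / 2 * x^2) / 2))"
    by (intro AE_I2) (simp flip: exp_add)
qed simp

lemma I_fun_scaled_has_real_derivative: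
  fixes a s :: real
  assumes a: "0 < a"
  shows "((\<lambda>s. sqrt (2 * pi) * I_fun (s / sqrt a)) has_real_derivative
    sqrt (2 * pi / a) * exp (s^2 / (2 * a)) * erf (s / sqrt (2 * a))) (at s)"
proof -
  have "((\<lambda>s. sqrt (2 * pi) * I_fun (s / sqrt a)) has_real_derivative
      sqrt (2 * pi) * (exp ((s / sqrt a)^2 / 2) * erf (s / sqrt a / sqrt 2) * (1 / sqrt a))) (at s)"
    by (intro DERIV_cmult DERIV_chain2[OF I_fun_has_real_derivative] DERIV_cdivide DERIV_ident)
  moreover have "sqrt (2 * pi) * (exp ((s / sqrt a)^2 / 2) * erf (s / sqrt a / sqrt 2) * (1 / sqrt a))
      = sqrt (2 * pi) * (1 / sqrt a) * exp ((s / sqrt a)^2 / 2) * erf (s / sqrt a / sqrt 2)"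
    by (simp only: mult_ac)
  moreover have "(s / sqrt a)^2 / 2 = s^2 / (2 * a)" "s / sqrt a / sqrt 2 = s / sqrt (2 * a)"
      "sqrt (2 * pi) * (1 / sqrt a) = sqrt (2 * pi / a)"
    using a by (simp_all add: power_divide real_sqrt_mult real_sqrt_divide)
  ultimately show ?thesis
    by (simp only:)
qed

lemma has_bochner_integral_interval_integral_sgn_mult_exp:
  fixes a S :: real
  assumes a: "0 < a"
  shows "has_bochner_integral lborel (\<lambda>\<eta>. LBINT s=0..S. sgn \<eta> * exp (\<eta> * s - a * \<eta>^2 / 2))
    (sqrt (2 * pi) * I_fun (S / sqrt a))"
proof -
  have bound: "\<bar>sgn \<eta> * exp (\<eta> * s - a * \<eta>^2 / 2)\<bar> \<le> exp (\<bar>S\<bar> * \<bar>\<eta>\<bar> - a * \<eta>^2 / 2)"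
    if "s \<in> {min 0 S..max 0 S}" for \<eta> s
  proof -
    have "\<eta> * s \<le> \<bar>\<eta>\<bar> * \<bar>s\<bar>"
      by (metis abs_ge_self abs_mult)
    also have "\<dots> \<le> \<bar>S\<bar> * \<bar>\<eta>\<bar>"
      using that by (subst mult.commute, intro mult_left_mono) auto
    finally show ?thesis
      by (simp add: abs_mult abs_sgn_eq)
  qed
  have "has_bochner_integral lborel (\<lambda>\<eta>. LBINT s=0..S. sgn \<eta> * exp (\<eta> * s - a * \<eta>^2 / 2))
      (LBINT s=0..S. \<integral>\<eta>. sgn \<eta> * exp (\<eta> * s - a * \<eta>^2 / 2) \<partial>lborel)"
    unfolding zero_ereal_def
    using integrable_exp_abs_mult_minus_sq[OF a] bound
    by (intro has_bochner_integral_interval_integral continuous_intros) measurable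
  also have "(LBINT s=0..S. \<integral>\<eta>. sgn \<eta> * exp (\<eta> * s - a * \<eta>^2 / 2) \<partial>lborel)
      = sqrt (2 * pi) * I_fun (S / sqrt a) - sqrt (2 * pi) * I_fun (0 / sqrt a)"
    unfolding lborel_integral_sgn_mult_exp[OF a] zero_ereal_def
    using a by (intro interval_integral_FTC_real I_fun_scaled_has_real_derivative continuous_intros
        continuous_on_compose2[OF continuous_on_erf]) auto
  finally show ?thesis
    by simp
qed

lemma has_bochner_integral_interval_integral_abs_mult_exp:
  fixes a :: real
  assumes a: "0 < a"
  shows "has_bochner_integral lborel (\<lambda>\<eta>. LBINT b=1..a. - (\<bar>\<eta>\<bar> * exp (- (b * \<eta>^2) / 2) / 2)) (- ln a)"
proof -
  define g where "g \<eta> = \<bar>\<eta>\<bar> * exp (- (min 1 a * \<eta>^2) / 2) / 2" for \<eta> :: real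
  have g_int: "integrable lborel g"
    using has_bochner_integral_abs_mult_exp_minus_sq[of "min 1 a"] a
    by (simp add: g_def[abs_def] has_bochner_integral_iff)
  have bound: "\<bar>- (\<bar>\<eta>\<bar> * exp (- (b * \<eta>^2) / 2) / 2)\<bar> \<le> g \<eta>" if "b \<in> {min 1 a..max 1 a}" for \<eta> b
  proof -
    have "min 1 a * \<eta>^2 \<le> b * \<eta>^2"
      using that by (intro mult_right_mono) auto
    then show ?thesis
      by (simp add: g_def abs_mult mult_left_mono)
  qed
  have inner: "(\<integral>\<eta>. - (\<bar>\<eta>\<bar> * exp (- (b * \<eta>^2) / 2) / 2) \<partial>lborel) = - (1 / b)" if "0 < b" for b :: real
    using has_bochner_integral_abs_mult_exp_minus_sq[OF that] by (simp add: has_bochner_integral_iff)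
  have "has_bochner_integral lborel (\<lambda>\<eta>. LBINT b=1..a. - (\<bar>\<eta>\<bar> * exp (- (b * \<eta>^2) / 2) / 2))
      (LBINT b=1..a. \<integral>\<eta>. - (\<bar>\<eta>\<bar> * exp (- (b * \<eta>^2) / 2) / 2) \<partial>lborel)"
    unfolding one_ereal_def
    using g_int bound by (intro has_bochner_integral_interval_integral continuous_intros) measurable
  also have "(LBINT b=1..a. \<integral>\<eta>. - (\<bar>\<eta>\<bar> * exp (- (b * \<eta>^2) / 2) / 2) \<partial>lborel) = (LBINT b=1..a. - (1 / b))"
    unfolding one_ereal_def
    using a by (intro interval_integral_cong inner) (auto simp: einterval_iff min_def max_def split: if_splits)
  also have "\<dots> = - ln a - - ln 1"
    unfolding one_ereal_def
    using a by (intro interval_integral_FTC_real continuous_intros derivative_eq_intros) auto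
  finally show ?thesis
    by simp
qed

lemma M_integrand_eq_interval_integrals:
  fixes n :: nat and S \<eta> :: real
  defines "a \<equiv> real n + 1"
  shows "M_integrand n S \<eta> = (LBINT s=0..S. sgn \<eta> * exp (\<eta> * s - a * \<eta>^2 / 2))
    + (LBINT b=1..a. - (\<bar>\<eta>\<bar> * exp (- (b * \<eta>^2) / 2) / 2))"
proof -
  have A_kernel: "sgn \<eta> * exp (\<eta> * s - a * \<eta>^2 / 2) = 1 / \<bar>\<eta>\<bar> * (\<eta> * exp (\<eta> * s + - (a * \<eta>^2 / 2)))" for s
    by (simp add: sgn_if)
  have A: "(LBINT s=0..S. sgn \<eta> * exp (\<eta> * s - a * \<eta>^2 / 2))
      = 1 / \<bar>\<eta>\<bar> * (exp (\<eta> * S - a * \<eta>^2 / 2) - exp (- (a * \<eta>^2 / 2)))"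
    unfolding A_kernel zero_ereal_def
    by (subst interval_lebesgue_integral_mult_right) (simp only: interval_integral_mult_exp_affine, simp)
  have B_kernel: "- (\<bar>\<eta>\<bar> * exp (- (b * \<eta>^2) / 2) / 2) = 1 / \<bar>\<eta>\<bar> * (- (\<eta>^2 / 2) * exp (- (\<eta>^2 / 2) * b + 0))" for b
    by (cases "\<eta> = 0") (simp_all add: power2_eq_square field_simps)
  have B: "(LBINT b=1..a. - (\<bar>\<eta>\<bar> * exp (- (b * \<eta>^2) / 2) / 2))
      = 1 / \<bar>\<eta>\<bar> * (exp (- (a * \<eta>^2 / 2)) - exp (- (\<eta>^2 / 2)))"
    unfolding B_kernel one_ereal_def
    by (subst interval_lebesgue_integral_mult_right) (simp only: interval_integral_mult_exp_affine, simp add: mult_ac)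
  have "exp (\<eta> * S - \<eta>^2 * real n / 2) * exp (- (\<eta>^2) / 2) = exp (\<eta> * S - a * \<eta>^2 / 2)"
    by (simp add: a_def field_simps flip: exp_add)
  then have "M_integrand n S \<eta> = (exp (\<eta> * S - a * \<eta>^2 / 2) - exp (- (\<eta>^2 / 2))) / \<bar>\<eta>\<bar>"
    unfolding M_integrand_def by (simp only: left_diff_distrib mult_1 minus_divide_left)
  then show ?thesis
    unfolding A B by (simp add: diff_divide_distrib)
qed

lemma has_bochner_integral_M_integrand:
  "has_bochner_integral lborel (M_integrand n S)
    (sqrt (2 * pi) * I_fun (S / sqrt (real n + 1)) - ln (real n + 1))"
proof -
  have "0 < real n + 1"
    by simp
  then have "has_bochner_integral lborel
      (\<lambda>\<eta>. (LBINT s=0..S. sgn \<eta> * exp (\<eta> * s - (real n + 1) * \<eta>^2 / 2))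
        + (LBINT b=1..real n + 1. - (\<bar>\<eta>\<bar> * exp (- (b * \<eta>^2) / 2) / 2)))
      (sqrt (2 * pi) * I_fun (S / sqrt (real n + 1)) + - ln (real n + 1))"
    by (intro has_bochner_integral_add has_bochner_integral_interval_integral_sgn_mult_exp
        has_bochner_integral_interval_integral_abs_mult_exp)
  then show ?thesis
    by (simp add: M_integrand_eq_interval_integrals[abs_def])
qed

theorem lemma4:
  fixes n :: nat and S :: real
  shows "integrable lborel (M_integrand n S) \<and>
    M_val n S = I_fun (S / sqrt (real n + 1)) - 1 / sqrt (2 * pi) * ln (1 + real n) \<and>
    (\<forall>x. I_fun x \<ge> 0) \<and>
    M_val n S \<ge> - (1 / sqrt (2 * pi)) * ln (1 + real n)"
proof -
  have "M_val n S = I_fun (S / sqrt (real n + 1)) - 1 / sqrt (2 * pi) * ln (1 + real n)"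
    using has_bochner_integral_M_integrand[of n S]
    by (simp add: M_val_def has_bochner_integral_iff right_diff_distrib add.commute)
  then show ?thesis
    using has_bochner_integral_M_integrand[of n S] I_fun_nonneg
    by (auto simp: has_bochner_integral_iff)
qed

end
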